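(* Let $G$ be a connected bipartite graph, $v\in V(G)$, and let $c_0$ be the mill-pond configuration $MP(v)$, i.e. $c_0(v)=1$ and $c_0(x)=0$ for all $x\neq v$. Then for every $t\geq0$, $c_t(v)=1$ if $t$ is even and $c_t(v)=1-\deg(v)$ if $t$ is odd. Moreover, for $i\in\{1,2,\ldots,\epsilon(v)\}$ and $x\in N_i(v)$, \[c_t(x)=\begin{cases}0 & t<i,\\ \deg^+(x) & t\geq i \text{ and } t-i\equiv 0 \pmod 2,\\ -\deg^-(x) & t\geq i \text{ and } t-i\equiv 1\pmod 2.\end{cases}\]
   Context: Diffusion process: for a finite simple graph $G$ and a chip configuration $c_t:V(G)\to\mathbb{Z}$ (negative values allowed), the next configuration is defined simultaneously for every vertex $u$ by $c_{t+1}(u)=c_t(u)-|\{w\in N(u): c_t(u)>c_t(w)\}|+|\{w\in N(u): c_t(u)<c_t(w)\}|$. $\epsilon(v)=\max_{w\in V(G)} d(v,w)$ is the eccentricity of $v$. For $i\geq0$, $N_i(v)$ is the set of vertices at distance exactly $i$ from $v$ (so $N_0(v)=\{v\}$). For $x\in N_i(v)$ with $i\geq1$, $\deg^+(x)=|N(x)\cap N_{i-1}(v)|$; for $x\in N_i(v)$ with $i\geq0$, $\deg^-(x)=|N(x)\cap N_{i+1}(v)|$. *)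

theory Defs
  imports Main
begin

definition simple_graph :: "'a set \<Rightarrow> ('a \<Rightarrow> 'a \<Rightarrow> bool) \<Rightarrow> bool" where
  "simple_graph V E \<longleftrightarrow> finite V \<and> (\<forall>u w. E u w \<longrightarrow> u \<in> V \<and> w \<in> V)
     \<and> (\<forall>u w. E u w \<longrightarrow> E w u) \<and> (\<forall>u. \<not> E u u)"

definition nbrs :: "'a set \<Rightarrow> ('a \<Rightarrow> 'a \<Rightarrow> bool) \<Rightarrow> 'a \<Rightarrow> 'a set" where
  "nbrs V E u = {w \<in> V. E u w}"

definition degree :: "'a set \<Rightarrow> ('a \<Rightarrow> 'a \<Rightarrow> bool) \<Rightarrow> 'a \<Rightarrow> nat" where
  "degree V E u = card (nbrs V E u)"

definition is_walk :: "'a set \<Rightarrow> ('a \<Rightarrow> 'a \<Rightarrow> bool) \<Rightarrow> 'a list \<Rightarrow> bool" where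
  "is_walk V E xs \<longleftrightarrow> xs \<noteq> [] \<and> set xs \<subseteq> V \<and> (\<forall>i. Suc i < length xs \<longrightarrow> E (xs ! i) (xs ! Suc i))"

definition walk_of_len :: "'a set \<Rightarrow> ('a \<Rightarrow> 'a \<Rightarrow> bool) \<Rightarrow> 'a \<Rightarrow> 'a \<Rightarrow> nat \<Rightarrow> bool" where
  "walk_of_len V E u w n \<longleftrightarrow> (\<exists>xs. is_walk V E xs \<and> hd xs = u \<and> last xs = w \<and> length xs = Suc n)"

definition connected_graph :: "'a set \<Rightarrow> ('a \<Rightarrow> 'a \<Rightarrow> bool) \<Rightarrow> bool" where
  "connected_graph V E \<longleftrightarrow> (\<forall>u\<in>V. \<forall>w\<in>V. \<exists>n. walk_of_len V E u w n)"

definition bipartite :: "'a set \<Rightarrow> ('a \<Rightarrow> 'a \<Rightarrow> bool) \<Rightarrow> bool" where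
  "bipartite V E \<longleftrightarrow> (\<exists>f :: 'a \<Rightarrow> bool. \<forall>u w. E u w \<longrightarrow> f u \<noteq> f w)"

text \<open>Graph distance (meaningful for connected graphs).\<close>
definition dist :: "'a set \<Rightarrow> ('a \<Rightarrow> 'a \<Rightarrow> bool) \<Rightarrow> 'a \<Rightarrow> 'a \<Rightarrow> nat" where
  "dist V E u w = (LEAST n. walk_of_len V E u w n)"

definition ecc :: "'a set \<Rightarrow> ('a \<Rightarrow> 'a \<Rightarrow> bool) \<Rightarrow> 'a \<Rightarrow> nat" where
  "ecc V E v = Max (dist V E v ` V)"

definition layer :: "'a set \<Rightarrow> ('a \<Rightarrow> 'a \<Rightarrow> bool) \<Rightarrow> 'a \<Rightarrow> nat \<Rightarrow> 'a set" where
  "layer V E v i = {x \<in> V. dist V E v x = i}"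

definition deg_plus :: "'a set \<Rightarrow> ('a \<Rightarrow> 'a \<Rightarrow> bool) \<Rightarrow> 'a \<Rightarrow> 'a \<Rightarrow> nat" where
  "deg_plus V E v x = card (nbrs V E x \<inter> layer V E v (dist V E v x - 1))"

definition deg_minus :: "'a set \<Rightarrow> ('a \<Rightarrow> 'a \<Rightarrow> bool) \<Rightarrow> 'a \<Rightarrow> 'a \<Rightarrow> nat" where
  "deg_minus V E v x = card (nbrs V E x \<inter> layer V E v (dist V E v x + 1))"

definition diffusion_step :: "'a set \<Rightarrow> ('a \<Rightarrow> 'a \<Rightarrow> bool) \<Rightarrow> ('a \<Rightarrow> int) \<Rightarrow> ('a \<Rightarrow> int)" where
  "diffusion_step V E c = (\<lambda>u. c u - int (card {w \<in> nbrs V E u. c u > c w})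
                               + int (card {w \<in> nbrs V E u. c u < c w}))"

definition diffusion :: "'a set \<Rightarrow> ('a \<Rightarrow> 'a \<Rightarrow> bool) \<Rightarrow> ('a \<Rightarrow> int) \<Rightarrow> nat \<Rightarrow> ('a \<Rightarrow> int)" where
  "diffusion V E c0 t = (diffusion_step V E ^^ t) c0"

definition mill_pond :: "'a \<Rightarrow> 'a \<Rightarrow> int" where
  "mill_pond v = (\<lambda>x. if x = v then 1 else 0)"

end

theory Submission
  imports Defs
begin

text \<open>In a connected bipartite graph every edge joins consecutive distance layers
  around v. The closed form says that a vertex at distance i is empty before time i
  and afterwards alternates between a high state (at least 1) and a low state (at most 0),
  its neighbours always being in the opposite state. So at each step a high vertex sends
  a chip to every neighbour, a low vertex receives one from every neighbour, and a vertex
  reached for the first time receives one from each neighbour one layer closer to v; by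
  the identity degree = deg_plus + deg_minus this reproduces the closed form one step
  later, and induction on t finishes the proof.\<close>

lemma walk_of_len_0_iff: "walk_of_len V E u w 0 \<longleftrightarrow> u \<in> V \<and> w = u"
  unfolding walk_of_len_def is_walk_def
  by (auto simp: length_Suc_conv) (rule exI[of _ "[u]"], simp)

lemma walk_of_len_snoc:
  assumes "walk_of_len V E u z n" and "E z w" and "w \<in> V"
  shows "walk_of_len V E u w (Suc n)"
proof -
  obtain xs where xs: "is_walk V E xs" "hd xs = u" "last xs = z" "length xs = Suc n"
    using assms(1) unfolding walk_of_len_def by blast
  have "is_walk V E (xs @ [w])"
    using xs(1,3) assms(2,3) unfolding is_walk_def
    by (auto simp: nth_append last_conv_nth less_Suc_eq) (metis diff_Suc_Suc minus_nat.diff_0)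
  moreover have "hd (xs @ [w]) = u"
    using xs(1,2) unfolding is_walk_def by simp
  ultimately show ?thesis
    using xs(4) unfolding walk_of_len_def by force
qed

lemma walk_of_len_SucE:
  assumes "walk_of_len V E u w (Suc n)"
  obtains z where "walk_of_len V E u z n" and "E z w"
proof -
  obtain xs where xs: "is_walk V E xs" "hd xs = u" "last xs = w" "length xs = Suc (Suc n)"
    using assms unfolding walk_of_len_def by blast
  obtain ys where ys: "xs = ys @ [w]"
    using xs(3,4) by (metis append_butlast_last_id list.size(3) nat.distinct(1))
  have len: "length ys = Suc n"
    using xs(4) ys by simp
  have "is_walk V E ys"
    using xs(1) len unfolding is_walk_def ys by (auto simp: nth_append) (metis less_SucI)
  moreover have "hd ys = u"
    using xs(2) len ys by (cases ys) auto
  moreover have "E (last ys) w"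
  proof -
    have "E (xs ! n) (xs ! Suc n)"
      using xs(1,4) unfolding is_walk_def by simp
    moreover have "last ys = ys ! n"
      using len by (metis diff_Suc_1 last_conv_nth list.size(3) nat.distinct(1))
    ultimately show ?thesis
      using len by (simp add: ys nth_append)
  qed
  ultimately show ?thesis
    using that len unfolding walk_of_len_def by blast
qed

lemma walk_of_len_parity:
  fixes f :: "'a \<Rightarrow> bool"
  assumes "\<forall>u w. E u w \<longrightarrow> f u \<noteq> f w" and "walk_of_len V E u w n"
  shows "f u \<noteq> f w \<longleftrightarrow> odd n"
  using assms(2)
proof (induction n arbitrary: w)
  case 0
  then show ?case by (simp add: walk_of_len_0_iff)
next
  case (Suc n)
  then obtain z where "walk_of_len V E u z n" and "E z w"
    by (blast elim: walk_of_len_SucE)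
  then have "f u \<noteq> f z \<longleftrightarrow> odd n" and "f z \<noteq> f w"
    using Suc.IH assms(1) by blast+
  then show ?case by (cases "f z") auto
qed

lemma diffusion_step_cong:
  assumes "\<forall>y \<in> insert x (nbrs V E x). c y = c' y"
  shows "diffusion_step V E c x = diffusion_step V E c' x"
proof -
  have "{w \<in> nbrs V E x. c x < c w} = {w \<in> nbrs V E x. c' x < c' w}"
    and "{w \<in> nbrs V E x. c w < c x} = {w \<in> nbrs V E x. c' w < c' x}"
    using assms by auto
  then show ?thesis
    using assms unfolding diffusion_step_def by simp
qed

lemma diffusion_step_no_lower_nbr:
  assumes "\<forall>w \<in> nbrs V E x. c x \<le> c w"
  shows "diffusion_step V E c x = c x + int (card {w \<in> nbrs V E x. c x < c w})"
proof -
  have "{w \<in> nbrs V E x. c w < c x} = {}"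
    using assms by force
  then show ?thesis
    unfolding diffusion_step_def by (simp only:) simp
qed

lemma diffusion_step_all_nbrs_lower:
  assumes "\<forall>w \<in> nbrs V E x. c w < c x"
  shows "diffusion_step V E c x = c x - int (degree V E x)"
proof -
  have "{w \<in> nbrs V E x. c w < c x} = nbrs V E x" and "{w \<in> nbrs V E x. c x < c w} = {}"
    using assms by force+
  then show ?thesis
    unfolding diffusion_step_def degree_def by (simp only:) simp
qed

locale rooted_connected_graph =
  fixes V :: "'a set" and E :: "'a \<Rightarrow> 'a \<Rightarrow> bool" and v :: 'a
  assumes simple: "simple_graph V E" and connected: "connected_graph V E" and root_in_V: "v \<in> V"
begin

abbreviation d :: "'a \<Rightarrow> nat" where
  "d \<equiv> dist V E v"

lemma finite_V: "finite V"
  and adj_in_V: "E x y \<Longrightarrow> x \<in> V \<and> y \<in> V"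
  and adj_sym: "E x y \<Longrightarrow> E y x"
  and adj_irrefl: "\<not> E x x"
  using simple unfolding simple_graph_def by blast+

lemma mem_nbrs_iff: "y \<in> nbrs V E x \<longleftrightarrow> E x y"
  unfolding nbrs_def using adj_in_V by auto

lemma finite_nbrs: "finite (nbrs V E x)"
  using finite_V unfolding nbrs_def by simp

lemma walk_of_len_dist: "x \<in> V \<Longrightarrow> walk_of_len V E v x (d x)"
  using connected root_in_V unfolding dist_def connected_graph_def by (meson LeastI)

lemma dist_le_walk_len: "walk_of_len V E v x n \<Longrightarrow> d x \<le> n"
  unfolding dist_def by (rule Least_le)

lemma dist_eq_0_iff: "x \<in> V \<Longrightarrow> d x = 0 \<longleftrightarrow> x = v"
  using walk_of_len_dist[of x] dist_le_walk_len[of v 0] root_in_V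
  by (auto simp: walk_of_len_0_iff)

lemma dist_root: "d v = 0"
  using dist_eq_0_iff root_in_V by blast

lemma dist_adj_le: "E x y \<Longrightarrow> d y \<le> d x + 1"
  using walk_of_len_snoc[OF walk_of_len_dist] dist_le_walk_len adj_in_V by fastforce

lemma exists_parent:
  assumes "x \<in> V" and "x \<noteq> v"
  obtains y where "E x y" and "d x = d y + 1"
proof -
  obtain n where n: "d x = Suc n"
    using assms dist_eq_0_iff by (cases "d x") auto
  then obtain y where "walk_of_len V E v y n" and "E y x"
    using walk_of_len_dist[OF assms(1)] by (metis walk_of_len_SucE)
  moreover from this have "d y \<le> n" and "d x \<le> d y + 1"
    using dist_le_walk_len dist_adj_le by blast+
  ultimately show ?thesis
    using that n adj_sym by force
qed

lemma deg_plus_root: "deg_plus V E v v = 0"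
proof -
  have "nbrs V E v \<inter> layer V E v 0 = {}"
    unfolding layer_def using dist_eq_0_iff mem_nbrs_iff adj_irrefl by auto
  then show ?thesis
    unfolding deg_plus_def dist_root by simp
qed

lemma deg_plus_pos: "x \<in> V \<Longrightarrow> x \<noteq> v \<Longrightarrow> 0 < deg_plus V E v x"
proof -
  assume "x \<in> V" and "x \<noteq> v"
  then obtain y where "E x y" and "d x = d y + 1"
    by (rule exists_parent)
  then have "y \<in> nbrs V E x \<inter> layer V E v (d x - 1)"
    using mem_nbrs_iff adj_in_V unfolding layer_def by auto
  then show ?thesis
    unfolding deg_plus_def using finite_nbrs card_gt_0_iff by blast
qed

lemma deg_minus_pos: "E x y \<Longrightarrow> d y = d x + 1 \<Longrightarrow> 0 < deg_minus V E v x"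
proof -
  assume "E x y" and "d y = d x + 1"
  then have "y \<in> nbrs V E x \<inter> layer V E v (d x + 1)"
    using mem_nbrs_iff adj_in_V unfolding layer_def by auto
  then show ?thesis
    unfolding deg_minus_def using finite_nbrs card_gt_0_iff by blast
qed

end

locale rooted_bipartite_graph = rooted_connected_graph +
  assumes bipartite: "bipartite V E"
begin

lemma dist_adj: "E x y \<Longrightarrow> d y = d x + 1 \<or> d x = d y + 1"
proof -
  assume xy: "E x y"
  obtain f :: "'a \<Rightarrow> bool" where f: "\<forall>u w. E u w \<longrightarrow> f u \<noteq> f w"
    using bipartite unfolding bipartite_def by blast
  have "walk_of_len V E v y (Suc (d x))"
    using walk_of_len_snoc[OF walk_of_len_dist] xy adj_in_V by blast
  then have "odd (Suc (d x)) \<longleftrightarrow> odd (d y)"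
    using walk_of_len_parity[OF f] walk_of_len_dist adj_in_V xy by blast
  moreover have "d y \<le> d x + 1" and "d x \<le> d y + 1"
    using dist_adj_le adj_sym xy by blast+
  ultimately show ?thesis
    by (metis add.commute add_Suc_right le_Suc_eq le_antisym odd_Suc_minus_one
        plus_1_eq_Suc even_Suc)
qed

lemma degree_eq_deg_plus_deg_minus:
  "degree V E x = deg_plus V E v x + deg_minus V E v x"
proof -
  have "nbrs V E x = (nbrs V E x \<inter> layer V E v (d x - 1)) \<union> (nbrs V E x \<inter> layer V E v (d x + 1))"
    using dist_adj unfolding layer_def nbrs_def by force
  moreover have "(nbrs V E x \<inter> layer V E v (d x - 1)) \<inter> (nbrs V E x \<inter> layer V E v (d x + 1)) = {}"
    unfolding layer_def by auto
  ultimately show ?thesis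
    unfolding degree_def deg_plus_def deg_minus_def
    by (metis card_Un_disjoint finite_Int finite_nbrs)
qed

text \<open>The closed form of the theorem; the summand mill_pond v x makes it valid at the
  root as well, where deg_plus vanishes and the degree equals deg_minus.\<close>

definition mill_pond_profile :: "nat \<Rightarrow> 'a \<Rightarrow> int" where
  "mill_pond_profile t x =
     (if t < d x then 0
      else if even (t - d x) then int (deg_plus V E v x) + mill_pond v x
      else mill_pond v x - int (deg_minus V E v x))"

lemma mill_pond_profile_pos:
  assumes "x \<in> V" and "d x \<le> t" and "even (t - d x)"
  shows "1 \<le> mill_pond_profile t x"
  using assms deg_plus_pos[of x] unfolding mill_pond_profile_def mill_pond_def by auto

lemma mill_pond_profile_nonpos:
  assumes "E x y" and "d x \<le> t" and "odd (t - d x)"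
  shows "mill_pond_profile t x \<le> 0"
proof (cases "x = v")
  case True
  then have "d y = d x + 1"
    using dist_adj[OF assms(1)] dist_root by simp
  then show ?thesis
    using deg_minus_pos[OF assms(1)] assms True unfolding mill_pond_profile_def mill_pond_def by simp
next
  case False
  then show ?thesis
    using assms unfolding mill_pond_profile_def mill_pond_def by simp
qed

lemma mill_pond_profile_nbr_nonpos:
  assumes "E x w" and "d x \<le> t" and "even (t - d x)"
  shows "mill_pond_profile t w \<le> 0"
proof (cases "t < d w")
  case True
  then show ?thesis unfolding mill_pond_profile_def by simp
next
  case False
  then have "odd (t - d w)"
    using dist_adj[OF assms(1)] assms(2,3) by auto
  then show ?thesis
    using mill_pond_profile_nonpos[OF adj_sym[OF assms(1)]] False by simp
qed

lemma mill_pond_profile_nbr_pos: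
  assumes "E x w" and "d x \<le> t" and "odd (t - d x)"
  shows "1 \<le> mill_pond_profile t w"
proof -
  have "d x \<noteq> t"
    using assms(3) by auto
  then have "d w \<le> t" and "even (t - d w)"
    using dist_adj[OF assms(1)] assms(2,3) by auto
  then show ?thesis
    using mill_pond_profile_pos adj_in_V[OF assms(1)] by blast
qed

lemma mill_pond_profile_nbr_before_arrival:
  assumes "E x w" and "Suc t < d x"
  shows "mill_pond_profile t w = 0"
  using dist_adj[OF assms(1)] assms(2) unfolding mill_pond_profile_def by auto

lemma mill_pond_profile_nbr_at_arrival:
  assumes "E x w" and "Suc t = d x"
  shows "0 \<le> mill_pond_profile t w \<and> (0 < mill_pond_profile t w \<longleftrightarrow> w \<in> layer V E v (d x - 1))"
proof -
  have "w \<in> V"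
    using adj_in_V assms(1) by blast
  consider "d w = d x + 1" | "d w = t"
    using dist_adj[OF assms(1)] assms(2) by fastforce
  then show ?thesis
  proof cases
    case 1
    then show ?thesis
      using assms(2) unfolding mill_pond_profile_def layer_def by auto
  next
    case 2
    then show ?thesis
      using mill_pond_profile_pos[OF \<open>w \<in> V\<close>] assms(2) \<open>w \<in> V\<close> unfolding layer_def by force
  qed
qed

lemma diffusion_step_mill_pond_profile:
  assumes "x \<in> V"
  shows "diffusion_step V E (mill_pond_profile t) x = mill_pond_profile (Suc t) x"
proof -
  consider (quiet) "Suc t < d x" | (arrival) "Suc t = d x"
    | (high) "d x \<le> t" and "even (t - d x)" | (low) "d x \<le> t" and "odd (t - d x)"
    by linarith
  then show ?thesis
  proof cases
    case quiet
    then have nbr: "\<forall>w \<in> nbrs V E x. mill_pond_profile t w = 0"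
      using mill_pond_profile_nbr_before_arrival by (auto simp: mem_nbrs_iff)
    then have none_higher: "{w \<in> nbrs V E x. 0 < mill_pond_profile t w} = {}"
      by auto
    have "mill_pond_profile t x = 0" and "mill_pond_profile (Suc t) x = 0"
      using quiet unfolding mill_pond_profile_def by auto
    then show ?thesis
      using nbr by (simp add: diffusion_step_no_lower_nbr none_higher)
  next
    case arrival
    have "x \<noteq> v"
      using arrival dist_root by auto
    have "mill_pond_profile t x = 0"
      using arrival unfolding mill_pond_profile_def by simp
    moreover have "{w \<in> nbrs V E x. 0 < mill_pond_profile t w} = nbrs V E x \<inter> layer V E v (d x - 1)"
      using mill_pond_profile_nbr_at_arrival[OF _ arrival] mem_nbrs_iff by blast
    ultimately show ?thesis
      using mill_pond_profile_nbr_at_arrival[OF _ arrival] mem_nbrs_iff arrival \<open>x \<noteq> v\<close>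
      by (simp add: diffusion_step_no_lower_nbr mill_pond_profile_def mill_pond_def deg_plus_def)
  next
    case high
    have "\<forall>w \<in> nbrs V E x. mill_pond_profile t w < mill_pond_profile t x"
      using mill_pond_profile_nbr_nonpos[OF _ high] mill_pond_profile_pos[OF assms high]
      by (fastforce simp: mem_nbrs_iff)
    moreover have "odd (Suc t - d x)"
      using high by (simp add: Suc_diff_le)
    ultimately show ?thesis
      using high
      by (simp add: diffusion_step_all_nbrs_lower degree_eq_deg_plus_deg_minus mill_pond_profile_def)
  next
    case low
    have "\<forall>w \<in> nbrs V E x. mill_pond_profile t x < mill_pond_profile t w"
      using mill_pond_profile_nbr_pos[OF _ low] mill_pond_profile_nonpos[OF _ low]
      by (fastforce simp: mem_nbrs_iff)
    then have "{w \<in> nbrs V E x. mill_pond_profile t x < mill_pond_profile t w} = nbrs V E x"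
      by blast
    moreover have "even (Suc t - d x)"
      using low by (simp add: Suc_diff_le)
    ultimately show ?thesis
      using low \<open>\<forall>w \<in> nbrs V E x. _\<close>
      by (simp add: diffusion_step_no_lower_nbr less_imp_le degree_eq_deg_plus_deg_minus degree_def[symmetric] mill_pond_profile_def)
  qed
qed

lemma diffusion_mill_pond_eq_profile:
  "x \<in> V \<Longrightarrow> diffusion V E (mill_pond v) t x = mill_pond_profile t x"
proof (induction t arbitrary: x)
  case 0
  then show ?case
    using dist_eq_0_iff[OF 0] dist_root deg_plus_root
    by (simp add: diffusion_def mill_pond_profile_def mill_pond_def)
next
  case (Suc t)
  have "\<forall>y \<in> insert x (nbrs V E x). diffusion V E (mill_pond v) t y = mill_pond_profile t y"
    using Suc mem_nbrs_iff adj_in_V by blast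
  then have "diffusion_step V E (diffusion V E (mill_pond v) t) x
      = diffusion_step V E (mill_pond_profile t) x"
    by (rule diffusion_step_cong)
  then show ?case
    using diffusion_step_mill_pond_profile[OF Suc.prems] by (simp add: diffusion_def)
qed

end

theorem theorem20:
  fixes V :: "'a set" and E :: "'a \<Rightarrow> 'a \<Rightarrow> bool" and v :: 'a
  assumes "simple_graph V E" and "connected_graph V E" and "bipartite V E" and "v \<in> V"
  shows "(\<forall>t. diffusion V E (mill_pond v) t v =
              (if even t then 1 else 1 - int (degree V E v)))
       \<and> (\<forall>i \<in> {1..ecc V E v}. \<forall>x \<in> layer V E v i. \<forall>t.
            diffusion V E (mill_pond v) t x =
              (if t < i then 0
               else if even (t - i) then int (deg_plus V E v x)
               else - int (deg_minus V E v x)))"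
proof -
  interpret rooted_bipartite_graph V E v
    using assms by unfold_locales
  have "diffusion V E (mill_pond v) t v = (if even t then 1 else 1 - int (degree V E v))" for t
    using diffusion_mill_pond_eq_profile[OF root_in_V] dist_root deg_plus_root
      degree_eq_deg_plus_deg_minus[of v]
    by (simp add: mill_pond_profile_def mill_pond_def)
  moreover have "diffusion V E (mill_pond v) t x =
      (if t < i then 0 else if even (t - i) then int (deg_plus V E v x) else - int (deg_minus V E v x))"
    if "1 \<le> i" and "x \<in> layer V E v i" for i x t
  proof -
    have "x \<in> V" and "d x = i"
      using that(2) unfolding layer_def by auto
    moreover have "x \<noteq> v"
      using \<open>d x = i\<close> that(1) dist_root by auto
    ultimately show ?thesis
      using diffusion_mill_pond_eq_profile by (simp add: mill_pond_profile_def mill_pond_def)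
  qed
  ultimately show ?thesis
    by auto
qed

end
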